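(* Let $L\subseteq\mathbb{T}^{\mathcal{J}}$ be a tropical linear space with associated tropical Plücker vector $p$, whose finite coordinates are indexed by $n$-element subsets of $\mathcal{J}$ (so $L=L_p$). Then the following are equivalent: (1) $L$ is an $n$-dimensional isotropical linear space; (2) $L^\top=L^r$; (3) $p_{\mathcal{J}\setminus T}=p_{T^*}$ for all $T\subseteq\mathcal{J}$ of size $n$.
   Context: $\mathbb{T}=\mathbb{R}\cup\{\infty\}$. Let $\mathcal{J}=\{1,\dots,n,1^*,\dots,n^*\}$ with involution $i\leftrightarrow i^*$, $i^{**}=i$, and $T^*=\{t^*:t\in T\}$. For a finite set $E$, a tropical Plücker vector of rank $r$ is $p\in\mathbb{T}^{\mathcal{P}(E)}$ with nonempty support $\{S:p_S\ne\infty\}$, all support sets of size $r$, such that for all $S,T\subseteq E$ with $|S|=r-1$, $|T|=r+1$, the minimum $\min_{i\in T\setminus S}(p_{S\cup\{i\}}+p_{T\setminus\{i\}})$ is attained at least twice or equals $\infty$. For $T\subseteq E$, $|T|=r+1$, let $(d_T)_i=p_{T\setminus\{i\}}$ if $i\in T$, $\infty$ otherwise; Plücker circuits are $d_T+\lambda\mathbf{1}$ ($\lambda\in\mathbb{R}$) with nonempty support. $x,y\in\mathbb{T}^E$ are tropically orthogonal if $\min_k(x_k+y_k)$ is attained at least twice or equals $\infty$; $X^\top$ is the set of vectors tropically orthogonal to all of $X$. The tropical linear space of $p$ is $L_p=\{$Plücker circuits of $p\}^\top$; a tropical linear space is a set of this form, $p$ is its associated tropical Plücker vector, and its dimension is $r$.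 The reflection of $v\in\mathbb{T}^{\mathcal{J}}$ is $v^r$ with $v^r_i=v_{i^*}$, and $L^r=\{x^r:x\in L\}$. An $n$-dimensional tropical linear space $L\subseteq\mathbb{T}^{\mathcal{J}}$ is isotropical if for all $x,y\in L$ the minimum $\min(x_1+y_{1^*},\dots,x_n+y_{n^*},x_{1^*}+y_1,\dots,x_{n^*}+y_n)$ is attained at least twice or equals $\infty$. *)

theory Defs
  imports Main "HOL-Library.Extended_Real"
begin

text \<open>Tropical semiring T = R \<union> {\<infinity>} is modelled inside ereal; vectors/Pluecker
  vectors are required to avoid -\<infinity> on the ground set and to be \<infinity> outside it.\<close>

datatype idx = Pl nat | St nat

fun star :: "idx \<Rightarrow> idx" where
  "star (Pl i) = St i"
| "star (St i) = Pl i"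

definition J :: "nat \<Rightarrow> idx set" where
  "J n = Pl ` {1..n} \<union> St ` {1..n}"

definition trop_vec :: "'a set \<Rightarrow> ('a \<Rightarrow> ereal) \<Rightarrow> bool" where
  "trop_vec E x \<longleftrightarrow> (\<forall>k\<in>E. x k \<noteq> -\<infinity>) \<and> (\<forall>k. k \<notin> E \<longrightarrow> x k = \<infinity>)"

definition trop_pvec :: "'a set \<Rightarrow> ('a set \<Rightarrow> ereal) \<Rightarrow> bool" where
  "trop_pvec E p \<longleftrightarrow> (\<forall>S. S \<subseteq> E \<longrightarrow> p S \<noteq> -\<infinity>) \<and> (\<forall>S. \<not> S \<subseteq> E \<longrightarrow> p S = \<infinity>)"

definition min_twice :: "'a set \<Rightarrow> ('a \<Rightarrow> ereal) \<Rightarrow> bool" where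
  "min_twice I f \<longleftrightarrow> (\<forall>k\<in>I. f k = \<infinity>) \<or>
     (\<exists>a\<in>I. \<exists>b\<in>I. a \<noteq> b \<and> f a = f b \<and> (\<forall>k\<in>I. f a \<le> f k))"

definition is_tpv :: "'a set \<Rightarrow> nat \<Rightarrow> ('a set \<Rightarrow> ereal) \<Rightarrow> bool" where
  "is_tpv E r p \<longleftrightarrow> finite E \<and> trop_pvec E p \<and> (\<exists>S. S \<subseteq> E \<and> p S \<noteq> \<infinity>) \<and>
     (\<forall>S. S \<subseteq> E \<and> p S \<noteq> \<infinity> \<longrightarrow> card S = r) \<and>
     (\<forall>S T. S \<subseteq> E \<and> T \<subseteq> E \<and> card S + 1 = r \<and> card T = r + 1 \<longrightarrow>
        min_twice (T - S) (\<lambda>i. p (insert i S) + p (T - {i})))"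

definition dvec :: "('a set \<Rightarrow> ereal) \<Rightarrow> 'a set \<Rightarrow> 'a \<Rightarrow> ereal" where
  "dvec p T i = (if i \<in> T then p (T - {i}) else \<infinity>)"

definition pl_circuits :: "'a set \<Rightarrow> nat \<Rightarrow> ('a set \<Rightarrow> ereal) \<Rightarrow> ('a \<Rightarrow> ereal) set" where
  "pl_circuits E r p = {x. \<exists>T. T \<subseteq> E \<and> card T = r + 1 \<and>
      (\<exists>c::real. x = (\<lambda>i. dvec p T i + ereal c)) \<and> (\<exists>i. x i \<noteq> \<infinity>)}"

definition torth :: "'a set \<Rightarrow> ('a \<Rightarrow> ereal) \<Rightarrow> ('a \<Rightarrow> ereal) \<Rightarrow> bool" where
  "torth E x y \<longleftrightarrow> min_twice E (\<lambda>k. x k + y k)"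

definition tperp :: "'a set \<Rightarrow> ('a \<Rightarrow> ereal) set \<Rightarrow> ('a \<Rightarrow> ereal) set" where
  "tperp E X = {y. trop_vec E y \<and> (\<forall>x\<in>X. torth E x y)}"

definition tls :: "'a set \<Rightarrow> nat \<Rightarrow> ('a set \<Rightarrow> ereal) \<Rightarrow> ('a \<Rightarrow> ereal) set" where
  "tls E r p = tperp E (pl_circuits E r p)"

definition is_tls_dim :: "'a set \<Rightarrow> nat \<Rightarrow> ('a \<Rightarrow> ereal) set \<Rightarrow> bool" where
  "is_tls_dim E r L \<longleftrightarrow> (\<exists>p. is_tpv E r p \<and> L = tls E r p)"

definition reflect :: "(idx \<Rightarrow> ereal) \<Rightarrow> idx \<Rightarrow> ereal" where
  "reflect x = (\<lambda>i. x (star i))"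

definition isotropical :: "nat \<Rightarrow> (idx \<Rightarrow> ereal) set \<Rightarrow> bool" where
  "isotropical n L \<longleftrightarrow> is_tls_dim (J n) n L \<and>
     (\<forall>x\<in>L. \<forall>y\<in>L. min_twice (J n) (\<lambda>k. x k + y (star k)))"

end

theory Submission
  imports Defs "HOL-Library.Product_Lexorder"
begin

text \<open>
  Isotropy of \<open>L\<close> says exactly that \<open>L\<^sup>r \<subseteq> L\<^sup>\<top>\<close>, so (2) implies (1).

  (1) \<open>\<Longrightarrow>\<close> (3): applying isotropy to the cocircuits \<open>p(\<cdot> \<union> (J - T))\<close> and \<open>p(\<cdot> \<union> S\<^sup>*)\<close> of \<open>L\<close>
  yields the Pluecker relations that mix the two rank-\<open>n\<close> Pluecker vectors \<open>S \<mapsto> p(S\<^sup>*)\<close> and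
  \<open>S \<mapsto> p(J - S)\<close>. Two Pluecker vectors satisfying all mixed relations differ by a constant
  (propagate the difference along basis exchanges), and comparing the values at \<open>B\<^sup>*\<close> and
  \<open>J - B\<^sup>*\<close> shows that the constant is \<open>0\<close>.

  (3) \<open>\<Longrightarrow>\<close> (2): under (3) the reflected cocircuits of \<open>L\<close> are precisely its circuits. Hence
  \<open>L\<^sup>\<top> \<subseteq> L\<^sup>r\<close>, as the circuits cut out \<open>L\<close>, and \<open>L\<^sup>r \<subseteq> L\<^sup>\<top>\<close>, as a vector orthogonal to all
  cocircuits is orthogonal to all of \<open>L\<close>. The latter is seen by comparing a point \<open>z\<close> of \<open>L\<close>
  with the cocircuit of an optimal basis for \<open>z\<close>: one with fewest elements in the finite
  support of \<open>z\<close>, and among those one minimising \<open>p(B) - \<Sum>\<^sub>B z\<close>.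
\<close>

lemma min_twice_cong:
  "(\<And>k. k \<in> I \<Longrightarrow> f k = g k) \<Longrightarrow> min_twice I f \<longleftrightarrow> min_twice I g"
  unfolding min_twice_def by (simp cong: ball_cong bex_cong conj_cong)

lemma min_twice_pair_iff:
  assumes "a \<noteq> b"
  shows "min_twice {a, b} f \<longleftrightarrow> f a = f b"
  using assms unfolding min_twice_def by (auto intro: order.eq_iff[THEN iffD2])

lemma min_twice_other_minimizer:
  assumes "min_twice I f" "a \<in> I" "f a \<noteq> \<infinity>"
  shows "\<exists>b\<in>I. b \<noteq> a \<and> (\<forall>k\<in>I. f b \<le> f k)"
  using assms unfolding min_twice_def by metis

lemma not_min_twice_unique_minimizer:
  assumes "finite I" "\<not> min_twice I f"
  obtains a where "a \<in> I" "f a \<noteq> \<infinity>" "\<And>k. k \<in> I \<Longrightarrow> k \<noteq> a \<Longrightarrow> f a < f k"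
proof -
  have "I \<noteq> {}" using assms(2) by (auto simp: min_twice_def)
  then have "Min (f ` I) \<in> f ` I" using assms(1) by simp
  then obtain a where a: "a \<in> I" "f a = Min (f ` I)" by force
  then have min: "\<forall>k\<in>I. f a \<le> f k" using assms(1) by simp
  have "f a \<noteq> \<infinity>"
    using min assms(2) by (force simp: min_twice_def top_ereal_def[symmetric] top_unique)
  moreover have "f a < f k" if "k \<in> I" "k \<noteq> a" for k
    using min that a(1) assms(2) unfolding min_twice_def by (metis order.not_eq_order_implies_strict)
  ultimately show ?thesis using that a(1) by blast
qed

lemma min_twice_restrict:
  assumes "A \<subseteq> I" "\<And>k. k \<in> I \<Longrightarrow> k \<notin> A \<Longrightarrow> f k = \<infinity>"
  shows "min_twice I f \<longleftrightarrow> min_twice A f"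
proof
  assume h: "min_twice I f"
  show "min_twice A f"
  proof (cases "\<forall>k\<in>A. f k = \<infinity>")
    case False
    then obtain k where k: "k \<in> A" "f k \<noteq> \<infinity>" by auto
    with h assms(1) obtain a b where ab: "a \<in> I" "b \<in> I" "a \<noteq> b" "f a = f b" "\<forall>k\<in>I. f a \<le> f k"
      unfolding min_twice_def by blast
    then have "f a \<noteq> \<infinity>" using k assms(1) by (metis PInfty_neq_ereal(1) ereal_infty_less_eq(1) subsetD)
    then have "a \<in> A" "b \<in> A" using assms(2) ab(1,2,4) by metis+
    then show ?thesis using ab assms(1) unfolding min_twice_def by blast
  qed (simp add: min_twice_def)
next
  assume h: "min_twice A f"
  show "min_twice I f"
  proof (cases "\<forall>k\<in>A. f k = \<infinity>")
    case False
    with h obtain a b where ab: "a \<in> A" "b \<in> A" "a \<noteq> b" "f a = f b" "\<forall>k\<in>A. f a \<le> f k"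
      unfolding min_twice_def by blast
    have "\<forall>k\<in>I. f a \<le> f k" using ab(5) assms(2) by (metis ereal_less_eq(1))
    then show ?thesis using ab assms(1) unfolding min_twice_def by blast
  qed (use assms(2) in \<open>auto simp: min_twice_def\<close>)
qed

lemma min_twice_add_const: "min_twice I (\<lambda>k. f k + ereal c) \<longleftrightarrow> min_twice I f"
proof -
  have le: "x + ereal c \<le> y + ereal c \<longleftrightarrow> x \<le> y" for x y
    by (simp add: ereal_add_le_add_iff2)
  have "x + ereal c = y + ereal c \<longleftrightarrow> x = y" for x y
    by (metis le order.antisym order_refl)
  moreover have "x + ereal c = \<infinity> \<longleftrightarrow> x = \<infinity>" for x
    by (cases x) auto
  ultimately show ?thesis unfolding min_twice_def le by simp
qed

lemma min_twice_image:
  assumes "inj_on g A"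
  shows "min_twice (g ` A) f \<longleftrightarrow> min_twice A (f \<circ> g)"
proof -
  have "(\<exists>a\<in>g ` A. \<exists>b\<in>g ` A. a \<noteq> b \<and> f a = f b \<and> (\<forall>k\<in>g ` A. f a \<le> f k)) \<longleftrightarrow>
        (\<exists>a\<in>A. \<exists>b\<in>A. g a \<noteq> g b \<and> f (g a) = f (g b) \<and> (\<forall>k\<in>A. f (g a) \<le> f (g k)))"
    by blast
  moreover have "g a \<noteq> g b \<longleftrightarrow> a \<noteq> b" if "a \<in> A" "b \<in> A" for a b
    using assms that by (auto dest: inj_onD)
  ultimately show ?thesis unfolding min_twice_def by (auto cong: bex_cong)
qed

section \<open>Mixed Pluecker relations\<close>

definition mixed_plucker :: "'a set \<Rightarrow> nat \<Rightarrow> ('a set \<Rightarrow> ereal) \<Rightarrow> ('a set \<Rightarrow> ereal) \<Rightarrow> bool" where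
  "mixed_plucker E r q s \<longleftrightarrow> (\<forall>S T. S \<subseteq> E \<and> T \<subseteq> E \<and> card S + 1 = r \<and> card T = r + 1 \<longrightarrow>
     min_twice (T - S) (\<lambda>i. q (insert i S) + s (T - {i})))"

lemma mixed_pluckerD:
  "mixed_plucker E r q s \<Longrightarrow> S \<subseteq> E \<Longrightarrow> T \<subseteq> E \<Longrightarrow> card S + 1 = r \<Longrightarrow> card T = r + 1 \<Longrightarrow>
   min_twice (T - S) (\<lambda>i. q (insert i S) + s (T - {i}))"
  unfolding mixed_plucker_def by blast

lemma is_tpv_mixed_plucker: "is_tpv E r p \<Longrightarrow> mixed_plucker E r p p"
  unfolding is_tpv_def mixed_plucker_def by (elim conjE) assumption

lemma is_tpv_finite: "is_tpv E r p \<Longrightarrow> finite E"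
  unfolding is_tpv_def by simp

lemma is_tpv_subset: "is_tpv E r p \<Longrightarrow> p S \<noteq> \<infinity> \<Longrightarrow> S \<subseteq> E"
  unfolding is_tpv_def trop_pvec_def by metis

lemma is_tpv_card: "is_tpv E r p \<Longrightarrow> p S \<noteq> \<infinity> \<Longrightarrow> card S = r"
  using is_tpv_subset[of E r p S] unfolding is_tpv_def by simp

lemma is_tpv_infinite_if_card: "is_tpv E r p \<Longrightarrow> card S \<noteq> r \<Longrightarrow> p S = \<infinity>"
  using is_tpv_card by blast

lemma is_tpv_not_MInfty: "is_tpv E r p \<Longrightarrow> p S \<noteq> -\<infinity>"
  unfolding is_tpv_def trop_pvec_def by (metis MInfty_neq_PInfty(1))

lemma is_tpv_ex_basis: "is_tpv E r p \<Longrightarrow> \<exists>B. p B \<noteq> \<infinity>"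
  unfolding is_tpv_def by (elim conjE exE) blast

lemma card_exchange_diff:
  assumes "finite C" "a \<in> C" "a \<notin> B" "i \<in> B" "card (C - B) = Suc d"
  shows "card (insert i (C - {a}) - B) = d"
proof -
  have "insert i (C - {a}) - B = (C - B) - {a}" using assms(4) by auto
  then show ?thesis using assms by (simp add: card_Diff_singleton)
qed

lemma mixed_plucker_exchange:
  assumes mp: "mixed_plucker E r q s" and "finite E"
    and "B \<subseteq> E" "card B = r" "C \<subseteq> E" "card C = r"
    and qB: "q B \<noteq> \<infinity>" and sC: "s C \<noteq> \<infinity>" and a: "a \<in> B" "a \<notin> C"
  obtains i where "i \<in> C" "i \<notin> B" "q (insert i (B - {a})) \<noteq> \<infinity>" "s (insert a (C - {i})) \<noteq> \<infinity>"
proof -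
  define S where "S = B - {a}"
  define T where "T = insert a C"
  define f where "f i = q (insert i S) + s (T - {i})" for i
  have "finite B" "finite C" using assms(2,3,5) finite_subset by auto
  then have "card S + 1 = r" "card T = r + 1"
    using a assms(4,6) card_Suc_Diff1[of B a] by (simp_all add: S_def T_def)
  moreover have "S \<subseteq> E" "T \<subseteq> E" using a assms(3,5) by (auto simp: S_def T_def)
  ultimately have mt: "min_twice (T - S) f"
    unfolding f_def by (intro mixed_pluckerD[OF mp])
  have aTS: "a \<in> T - S" using a by (simp add: S_def T_def)
  have "f a = q B + s C" using a by (simp add: S_def T_def f_def insert_absorb)
  then have fa: "f a \<noteq> \<infinity>" using qB sC by simp
  then obtain i where i: "i \<in> T - S" "i \<noteq> a" "\<forall>k\<in>T - S. f i \<le> f k"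
    using min_twice_other_minimizer[OF mt aTS] by blast
  have "f i \<le> f a" using i(3) aTS by blast
  then have "q (insert i S) \<noteq> \<infinity>" "s (T - {i}) \<noteq> \<infinity>" using fa by (auto simp: f_def)
  moreover have "T - {i} = insert a (C - {i})" using i(2) by (auto simp: T_def)
  moreover have "i \<in> C" "i \<notin> B" using i(1,2) by (auto simp: S_def T_def)
  ultimately show ?thesis using that by (simp add: S_def)
qed

lemma mixed_plucker_adjacent:
  assumes mp: "mixed_plucker E r q s" and "finite E"
    and "C \<subseteq> E" "card C = r" "a \<in> C" "i \<in> E" "i \<notin> C"
  shows "q C + s (insert i (C - {a})) = q (insert i (C - {a})) + s C"
proof -
  define S where "S = C - {a}"
  define T where "T = insert i C"
  have "finite C" using assms(2,3) finite_subset by auto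
  then have "card S + 1 = r" "card T = r + 1"
    using assms(4,5,7) card_Suc_Diff1[of C a] by (simp_all add: S_def T_def)
  moreover have "S \<subseteq> E" "T \<subseteq> E" using assms(3,6) by (auto simp: S_def T_def)
  ultimately have "min_twice (T - S) (\<lambda>k. q (insert k S) + s (T - {k}))"
    by (intro mixed_pluckerD[OF mp])
  moreover have "T - S = {a, i}" "a \<noteq> i" using assms(5,7) by (auto simp: S_def T_def)
  ultimately have "q (insert a S) + s (T - {a}) = q (insert i S) + s (T - {i})"
    by (simp add: min_twice_pair_iff)
  moreover have "insert a S = C" "T - {a} = insert i (C - {a})" "T - {i} = C"
    using assms(5,7) by (auto simp: S_def T_def)
  ultimately show ?thesis by (simp add: S_def)
qed

lemma eq_if_card_diff_0:
  assumes "finite B" "finite C" "card B = card C" "card (B - C) = 0"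
  shows "B = C"
proof -
  have "B - C = {}" using assms(1,4) by simp
  then show ?thesis using card_subset_eq[OF assms(2) _ assms(3)] by blast
qed

lemma ereal_shift_transfer:
  fixes a b a' b' :: ereal
  assumes "\<bar>a\<bar> \<noteq> \<infinity>" "\<bar>b\<bar> \<noteq> \<infinity>" "a = b + ereal c" "a + b' = a' + b"
  shows "a' = b' + ereal c"
proof -
  obtain x y where "a = ereal x" "b = ereal y" using assms(1,2) by (cases a; cases b) auto
  then show ?thesis using assms(3,4) by (cases a'; cases b') auto
qed

lemma mixed_plucker_common_basis:
  assumes tq: "is_tpv E r q" and ts: "is_tpv E r s" and mp: "mixed_plucker E r q s"
  obtains C where "q C \<noteq> \<infinity>" "s C \<noteq> \<infinity>"
proof -
  obtain B C where qB: "q B \<noteq> \<infinity>" and sC: "s C \<noteq> \<infinity>"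
    using is_tpv_ex_basis[OF tq] is_tpv_ex_basis[OF ts] by blast
  have fin: "finite E" using is_tpv_finite[OF tq] .
  have CE: "C \<subseteq> E" "card C = r" using is_tpv_subset[OF ts sC] is_tpv_card[OF ts sC] .
  have "\<exists>C'. q C' \<noteq> \<infinity> \<and> s C' \<noteq> \<infinity>" if "card (B - C) = d" "q B \<noteq> \<infinity>" for B d
    using that
  proof (induction d arbitrary: B)
    case 0
    then have "B \<subseteq> E" "card B = r" using is_tpv_subset[OF tq] is_tpv_card[OF tq] by auto
    then have "B = C" using eq_if_card_diff_0 0 CE fin finite_subset by metis
    then show ?case using sC 0 by blast
  next
    case (Suc d)
    then have BE: "B \<subseteq> E" "card B = r" using is_tpv_subset[OF tq] is_tpv_card[OF tq] by auto
    have "B - C \<noteq> {}" using Suc.prems(1) by (metis card.empty Zero_not_Suc)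
    then obtain a where a: "a \<in> B" "a \<notin> C" by blast
    obtain i where i: "i \<in> C" "i \<notin> B" "q (insert i (B - {a})) \<noteq> \<infinity>"
      by (rule mixed_plucker_exchange[OF mp fin BE CE Suc.prems(2) sC a])
    have "finite B" using BE fin finite_subset by blast
    then have "card (insert i (B - {a}) - C) = d"
      using card_exchange_diff[OF _ a i(1) Suc.prems(1)] by blast
    then show ?case using Suc.IH i(3) by blast
  qed
  then show ?thesis using qB that by blast
qed

lemma mixed_plucker_shift_step:
  assumes tq: "is_tpv E r q" and ts: "is_tpv E r s" and mp: "mixed_plucker E r q s"
    and qC: "q C \<noteq> \<infinity>" and sC: "s C \<noteq> \<infinity>" and shift: "q C = s C + ereal c"
    and B: "q B \<noteq> \<infinity> \<or> s B \<noteq> \<infinity>" and a: "a \<in> C" "a \<notin> B"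
  obtains i where "i \<in> B" "i \<notin> C" "s (insert i (C - {a})) \<noteq> \<infinity>"
    "q (insert i (C - {a})) = s (insert i (C - {a})) + ereal c"
proof -
  have fin: "finite E" using is_tpv_finite[OF tq] .
  have BE: "B \<subseteq> E" "card B = r"
    using B is_tpv_subset[OF tq] is_tpv_subset[OF ts] is_tpv_card[OF tq] is_tpv_card[OF ts] by metis+
  have CE: "C \<subseteq> E" "card C = r" using is_tpv_subset[OF tq qC] is_tpv_card[OF tq qC] .
  define C' where "C' i = insert i (C - {a})" for i
  obtain i where i: "i \<in> B" "i \<notin> C" "q (C' i) \<noteq> \<infinity> \<or> s (C' i) \<noteq> \<infinity>"
  proof (cases "q B = \<infinity>")
    case True
    then have "s B \<noteq> \<infinity>" using B by blast
    obtain j where "j \<in> B" "j \<notin> C" "s (insert j (C - {a})) \<noteq> \<infinity>"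
      by (rule mixed_plucker_exchange[OF is_tpv_mixed_plucker[OF ts] fin CE BE sC \<open>s B \<noteq> \<infinity>\<close> a])
    then show ?thesis using that unfolding C'_def by blast
  next
    case False
    obtain j where "j \<in> B" "j \<notin> C" "q (insert j (C - {a})) \<noteq> \<infinity>"
      by (rule mixed_plucker_exchange[OF is_tpv_mixed_plucker[OF tq] fin CE BE qC False a])
    then show ?thesis using that unfolding C'_def by blast
  qed
  have "q C + s (C' i) = q (C' i) + s C"
    unfolding C'_def using mixed_plucker_adjacent[OF mp fin CE a(1)] i(1,2) BE(1) by blast
  moreover have "\<bar>q C\<bar> \<noteq> \<infinity>" "\<bar>s C\<bar> \<noteq> \<infinity>"
    using qC sC is_tpv_not_MInfty[OF tq, of C] is_tpv_not_MInfty[OF ts, of C] by auto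
  ultimately have "q (C' i) = s (C' i) + ereal c"
    using ereal_shift_transfer[of "q C" "s C" c "s (C' i)" "q (C' i)"] shift by simp
  moreover have "s (C' i) \<noteq> \<infinity>" using i(3) calculation by auto
  ultimately show ?thesis using that i(1,2) unfolding C'_def by blast
qed

lemma mixed_plucker_propagate_shift:
  assumes tq: "is_tpv E r q" and ts: "is_tpv E r s" and mp: "mixed_plucker E r q s"
    and "q C \<noteq> \<infinity>" "s C \<noteq> \<infinity>" "q C = s C + ereal c"
  shows "q B = s B + ereal c"
proof (cases "q B = \<infinity> \<and> s B = \<infinity>")
  case False
  then have Bfin: "q B \<noteq> \<infinity> \<or> s B \<noteq> \<infinity>" by blast
  have fin: "finite E" using is_tpv_finite[OF tq] .
  have B: "B \<subseteq> E" "card B = r"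
    using Bfin is_tpv_subset[OF tq] is_tpv_subset[OF ts] is_tpv_card[OF tq] is_tpv_card[OF ts] by metis+
  have "q B = s B + ereal c"
    if "card (C - B) = d" "q C \<noteq> \<infinity>" "s C \<noteq> \<infinity>" "q C = s C + ereal c" for C d
    using that
  proof (induction d arbitrary: C)
    case 0
    then have "C \<subseteq> E" "card C = r" using is_tpv_subset[OF tq] is_tpv_card[OF tq] by auto
    then have "C = B" using eq_if_card_diff_0 0 B fin finite_subset by metis
    then show ?case using 0 by blast
  next
    case (Suc d)
    have "C - B \<noteq> {}" using Suc.prems(1) by (metis card.empty Zero_not_Suc)
    then obtain a where a: "a \<in> C" "a \<notin> B" by blast
    obtain i where i: "i \<in> B" "s (insert i (C - {a})) \<noteq> \<infinity>"
      "q (insert i (C - {a})) = s (insert i (C - {a})) + ereal c"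
      using mixed_plucker_shift_step[OF tq ts mp Suc.prems(2-4) Bfin a] by blast
    have "finite C" using is_tpv_subset[OF tq Suc.prems(2)] fin finite_subset by blast
    then have "card (insert i (C - {a}) - B) = d" by (rule card_exchange_diff[OF _ a i(1) Suc.prems(1)])
    moreover have "q (insert i (C - {a})) \<noteq> \<infinity>" using i(2,3) by simp
    ultimately show ?case using i(2,3) by (rule Suc.IH)
  qed
  then show ?thesis using assms(4-6) by blast
qed simp

lemma mixed_plucker_eq_shift:
  assumes tq: "is_tpv E r q" and ts: "is_tpv E r s" and mp: "mixed_plucker E r q s"
  obtains c where "\<And>S. q S = s S + ereal c"
proof -
  obtain C where qC: "q C \<noteq> \<infinity>" and sC: "s C \<noteq> \<infinity>"
    using mixed_plucker_common_basis[OF tq ts mp] .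
  obtain x y where "q C = ereal x" "s C = ereal y"
    using qC sC is_tpv_not_MInfty[OF tq] is_tpv_not_MInfty[OF ts] by (metis ereal_cases)
  then have "q C = s C + ereal (x - y)" by simp
  then show ?thesis using that mixed_plucker_propagate_shift[OF tq ts mp qC sC] by blast
qed

section \<open>Cocircuits and orthogonality to a tropical linear space\<close>

lemma trop_vec_not_MInfty: "trop_vec E z \<Longrightarrow> z k \<noteq> -\<infinity>"
  unfolding trop_vec_def by (cases "k \<in> E") auto

lemma trop_vec_finite_in: "trop_vec E z \<Longrightarrow> z k \<noteq> \<infinity> \<Longrightarrow> k \<in> E"
  unfolding trop_vec_def by (cases "k \<in> E") auto

lemma tls_trop_vec: "z \<in> tls E r p \<Longrightarrow> trop_vec E z"
  unfolding tls_def tperp_def by simp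

lemma tls_min_twice_dvec:
  assumes "z \<in> tls E r p" "T \<subseteq> E" "card T = r + 1"
  shows "min_twice E (\<lambda>k. dvec p T k + z k)"
proof (cases "\<exists>k. dvec p T k \<noteq> \<infinity>")
  case True
  then obtain k where "dvec p T k + ereal 0 \<noteq> \<infinity>" by auto
  then have "(\<lambda>k. dvec p T k + ereal 0) \<in> pl_circuits E r p"
    using assms(2,3) unfolding pl_circuits_def by blast
  then have "torth E (\<lambda>k. dvec p T k + ereal 0) z"
    using assms(1) unfolding tls_def tperp_def by blast
  then show ?thesis unfolding torth_def by (simp add: zero_ereal_def[symmetric])
qed (simp add: min_twice_def)

lemma cocircuit_in_tls:
  assumes tp: "is_tpv E r p" and "S \<subseteq> E" "card S + 1 = r"
  shows "(\<lambda>k. p (insert k S)) \<in> tls E r p"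
proof -
  have "p (insert k S) = \<infinity>" if "k \<notin> E" for k
    using that is_tpv_subset[OF tp, of "insert k S"] by blast
  then have tv: "trop_vec E (\<lambda>k. p (insert k S))"
    using is_tpv_not_MInfty[OF tp] unfolding trop_vec_def by blast
  have "card S \<noteq> r" using assms(3) by simp
  then have pS: "p S = \<infinity>" by (rule is_tpv_infinite_if_card[OF tp])
  have "torth E x (\<lambda>k. p (insert k S))" if xC: "x \<in> pl_circuits E r p" for x
  proof -
    obtain T c where T: "T \<subseteq> E" "card T = r + 1" and x: "x = (\<lambda>k. dvec p T k + ereal c)"
      using xC unfolding pl_circuits_def by blast
    have "torth E x (\<lambda>k. p (insert k S)) \<longleftrightarrow>
          min_twice E (\<lambda>k. (dvec p T k + p (insert k S)) + ereal c)"
      unfolding torth_def x by (simp add: ac_simps)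
    also have "\<dots> \<longleftrightarrow> min_twice E (\<lambda>k. dvec p T k + p (insert k S))"
      by (rule min_twice_add_const)
    also have "\<dots> \<longleftrightarrow> min_twice (T - S) (\<lambda>k. dvec p T k + p (insert k S))"
    proof (rule min_twice_restrict)
      fix k assume "k \<in> E" "k \<notin> T - S"
      then have "k \<notin> T \<or> insert k S = S" by blast
      then show "dvec p T k + p (insert k S) = \<infinity>" using pS by (auto simp: dvec_def)
    qed (use T(1) in blast)
    also have "\<dots> \<longleftrightarrow> min_twice (T - S) (\<lambda>k. p (insert k S) + p (T - {k}))"
      by (rule min_twice_cong) (simp add: dvec_def add.commute)
    finally show ?thesis
      using mixed_pluckerD[OF is_tpv_mixed_plucker[OF tp] assms(2) T(1) assms(3) T(2)] by simp
  qed
  then show ?thesis unfolding tls_def tperp_def using tv by blast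
qed

lemma tls_basis_exchange:
  assumes tp: "is_tpv E r p" and z: "z \<in> tls E r p"
    and "B \<subseteq> E" "p B \<noteq> \<infinity>" "i \<in> E" "i \<notin> B" "z i \<noteq> \<infinity>"
  obtains j where "j \<in> B" "z j \<noteq> \<infinity>" "p (insert i (B - {j})) \<noteq> \<infinity>"
    "p (insert i (B - {j})) + z j \<le> p B + z i"
proof -
  define T where "T = insert i B"
  have "finite B" using assms(3) is_tpv_finite[OF tp] finite_subset by blast
  then have "T \<subseteq> E" "card T = r + 1"
    using assms(3-6) is_tpv_card[OF tp] by (simp_all add: T_def)
  then have mt: "min_twice E (\<lambda>k. dvec p T k + z k)" by (rule tls_min_twice_dvec[OF z])
  have dTi: "dvec p T i = p B" using assms(6) by (simp add: T_def dvec_def)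
  then have "dvec p T i + z i \<noteq> \<infinity>" using assms(4,7) by simp
  then obtain j where j: "j \<in> E" "j \<noteq> i" "\<forall>k\<in>E. dvec p T j + z j \<le> dvec p T k + z k"
    using min_twice_other_minimizer[OF mt assms(5)] by blast
  then have "dvec p T j + z j \<le> dvec p T i + z i" using assms(5) by blast
  then have le: "dvec p T j + z j \<le> p B + z i" using dTi by simp
  then have fin: "dvec p T j \<noteq> \<infinity>" "z j \<noteq> \<infinity>" using assms(4,7) by auto
  then have "j \<in> B" using j(2) by (auto simp: dvec_def T_def split: if_splits)
  moreover have "dvec p T j = p (insert i (B - {j}))"
    using \<open>j \<in> B\<close> j(2) by (auto simp: dvec_def T_def insert_Diff_if)
  ultimately show ?thesis using that fin le by simp
qed

lemma card_insert_Diff_swap: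
  assumes "finite A" "b \<in> A" "a \<notin> A"
  shows "card (insert a (A - {b})) = card A"
proof -
  have "card (insert a (A - {b})) = Suc (card (A - {b}))" using assms by simp
  also have "\<dots> = card A" using card_Suc_Diff1[OF assms(1,2)] .
  finally show ?thesis .
qed

definition basis_key :: "('a set \<Rightarrow> ereal) \<Rightarrow> ('a \<Rightarrow> ereal) \<Rightarrow> 'a set \<Rightarrow> nat \<times> real" where
  "basis_key p z B = (card {j\<in>B. z j \<noteq> \<infinity>},
     real_of_ereal (p B) - (\<Sum>j\<in>{j\<in>B. z j \<noteq> \<infinity>}. real_of_ereal (z j)))"

lemma basis_key_exchange:
  assumes "finite B" "b \<in> B" "a \<notin> B"
    and "\<bar>p B\<bar> \<noteq> \<infinity>" "\<bar>p (insert a (B - {b}))\<bar> \<noteq> \<infinity>" "\<bar>z a\<bar> \<noteq> \<infinity>" "\<bar>z b\<bar> \<noteq> \<infinity>"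
  shows "basis_key p z (insert a (B - {b})) \<le> basis_key p z B \<longleftrightarrow>
    p (insert a (B - {b})) + z b \<le> p B + z a"
proof -
  obtain u u' x y where u: "p B = ereal u" "p (insert a (B - {b})) = ereal u'"
    and x: "z a = ereal x" "z b = ereal y"
    using assms(4-7) by (elim abs_neq_infinity_cases)
  let ?F = "\<lambda>A. {j\<in>A. z j \<noteq> \<infinity>}"
  let ?\<sigma> = "\<Sum>j\<in>?F B. real_of_ereal (z j)"
  have eq: "?F (insert a (B - {b})) = insert a (?F B - {b})" using x by auto
  have F: "finite (?F B)" "b \<in> ?F B" "a \<notin> ?F B" using assms(1-3) x by auto
  have "card (?F (insert a (B - {b}))) = card (?F B)"
    unfolding eq by (rule card_insert_Diff_swap[OF F])
  moreover have "(\<Sum>j\<in>?F (insert a (B - {b})). real_of_ereal (z j)) = ?\<sigma> - y + x"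
    unfolding eq using F x by (simp add: sum_diff1)
  ultimately have "basis_key p z (insert a (B - {b})) = (card (?F B), u' - (?\<sigma> - y + x))"
    unfolding basis_key_def u by simp
  moreover have "basis_key p z B = (card (?F B), u - ?\<sigma>)"
    unfolding basis_key_def u by simp
  ultimately show ?thesis using u x by (simp add: prod_le_def algebra_simps)
qed

lemma basis_key_drop_less:
  assumes "finite B" "b \<in> B" "a \<notin> B" "z a = \<infinity>" "z b \<noteq> \<infinity>"
  shows "basis_key p z (insert a (B - {b})) < basis_key p z B"
proof -
  let ?F = "\<lambda>A. {j\<in>A. z j \<noteq> \<infinity>}"
  have "?F (insert a (B - {b})) = ?F B - {b}" using assms(4) by auto
  moreover have "finite (?F B)" "b \<in> ?F B" using assms(1,2,5) by auto
  ultimately have "card (?F (insert a (B - {b}))) < card (?F B)"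
    using card_Diff1_less[of "?F B" b] by simp
  then show ?thesis by (simp add: basis_key_def prod_less_def)
qed

lemma tls_key_minimal_basis:
  assumes tp: "is_tpv E r p" and z: "z \<in> tls E r p" and zi: "z i \<noteq> \<infinity>"
  obtains B where "B \<subseteq> E" "p B \<noteq> \<infinity>" "i \<in> B"
    "\<And>B'. B' \<subseteq> E \<Longrightarrow> p B' \<noteq> \<infinity> \<Longrightarrow> basis_key p z B \<le> basis_key p z B'"
proof -
  have tz: "trop_vec E z" by (rule tls_trop_vec[OF z])
  have iE: "i \<in> E" by (rule trop_vec_finite_in[OF tz zi])
  define Bs where "Bs = {B. B \<subseteq> E \<and> p B \<noteq> \<infinity>}"
  have "finite Bs" using is_tpv_finite[OF tp] by (simp add: Bs_def)
  moreover have "Bs \<noteq> {}" using is_tpv_ex_basis[OF tp] is_tpv_subset[OF tp] by (auto simp: Bs_def)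
  ultimately obtain B1 where B1: "B1 \<in> Bs" "\<And>B. B \<in> Bs \<Longrightarrow> basis_key p z B1 \<le> basis_key p z B"
    using arg_min_if_finite(1) arg_min_least by metis
  show ?thesis
  proof (cases "i \<in> B1")
    case False
    have B1E: "B1 \<subseteq> E" "p B1 \<noteq> \<infinity>" using B1(1) by (simp_all add: Bs_def)
    then obtain j where j: "j \<in> B1" "z j \<noteq> \<infinity>" "p (insert i (B1 - {j})) \<noteq> \<infinity>"
      "p (insert i (B1 - {j})) + z j \<le> p B1 + z i"
      by (rule tls_basis_exchange[OF tp z _ _ iE False zi])
    define B where "B = insert i (B1 - {j})"
    have BE: "B \<subseteq> E" using B1E(1) iE by (auto simp: B_def)
    have "finite B1" using B1E(1) is_tpv_finite[OF tp] finite_subset by blast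
    moreover have "\<bar>p B\<bar> \<noteq> \<infinity>" "\<bar>p B1\<bar> \<noteq> \<infinity>" "\<bar>z i\<bar> \<noteq> \<infinity>" "\<bar>z j\<bar> \<noteq> \<infinity>"
      using B1E(2) j(2,3) zi is_tpv_not_MInfty[OF tp] trop_vec_not_MInfty[OF tz]
      by (auto simp: B_def abs_neq_infinity_cases)
    ultimately have "basis_key p z B \<le> basis_key p z B1"
      using basis_key_exchange[of B1 j i p z] j(1,4) False by (simp add: B_def)
    then show ?thesis
      using that[OF BE j(3)[folded B_def]] B1(2) by (auto simp: B_def Bs_def intro: order_trans)
  qed (use B1 that in \<open>auto simp: Bs_def\<close>)
qed

lemma key_minimal_basis_exchange:
  assumes tp: "is_tpv E r p" and tz: "trop_vec E z"
    and B: "B \<subseteq> E" "p B \<noteq> \<infinity>" "i \<in> B" and zi: "z i \<noteq> \<infinity>"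
    and min: "\<And>B'. B' \<subseteq> E \<Longrightarrow> p B' \<noteq> \<infinity> \<Longrightarrow> basis_key p z B \<le> basis_key p z B'"
    and j: "j \<notin> B" and finite: "p (insert j (B - {i})) \<noteq> \<infinity>"
  shows "p B + z j \<le> p (insert j (B - {i})) + z i"
proof -
  let ?B' = "insert j (B - {i})"
  have finB: "finite B" using B(1) is_tpv_finite[OF tp] finite_subset by blast
  have B'E: "?B' \<subseteq> E" using finite by (rule is_tpv_subset[OF tp])
  show ?thesis
  proof (cases "z j = \<infinity>")
    case True
    then have "basis_key p z ?B' < basis_key p z B" using finB B(3) j zi by (intro basis_key_drop_less)
    then show ?thesis using min[OF B'E finite] by simp
  next
    case False
    have "insert i (?B' - {j}) = B" "i \<notin> ?B'" using B(3) j by auto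
    moreover have "finite ?B'" using finB by simp
    moreover have "\<bar>p B\<bar> \<noteq> \<infinity>" "\<bar>p ?B'\<bar> \<noteq> \<infinity>" "\<bar>z i\<bar> \<noteq> \<infinity>" "\<bar>z j\<bar> \<noteq> \<infinity>"
      using B(2) finite zi False is_tpv_not_MInfty[OF tp] trop_vec_not_MInfty[OF tz]
      by (auto simp: abs_neq_infinity_cases)
    ultimately show ?thesis using basis_key_exchange[of ?B' j i p z] min[OF B'E finite] by simp
  qed
qed

lemma tls_optimal_basis:
  assumes tp: "is_tpv E r p" and z: "z \<in> tls E r p" and zi: "z i \<noteq> \<infinity>"
  obtains S where "S \<subseteq> E" "card S + 1 = r" "p (insert i S) \<noteq> \<infinity>"
    "\<And>j. p (insert i S) + z j \<le> p (insert j S) + z i"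
proof -
  have tz: "trop_vec E z" by (rule tls_trop_vec[OF z])
  obtain B where B: "B \<subseteq> E" "p B \<noteq> \<infinity>" "i \<in> B"
    and min: "\<And>B'. B' \<subseteq> E \<Longrightarrow> p B' \<noteq> \<infinity> \<Longrightarrow> basis_key p z B \<le> basis_key p z B'"
    by (rule tls_key_minimal_basis[OF tp z zi]) blast
  have finB: "finite B" using B(1) is_tpv_finite[OF tp] finite_subset by blast
  define S where "S = B - {i}"
  have BS: "insert i S = B" using B(3) by (auto simp: S_def)
  have SE: "S \<subseteq> E" using B(1) by (auto simp: S_def)
  have cS: "card S + 1 = r"
    using card_Suc_Diff1[OF finB B(3)] is_tpv_card[OF tp B(2)] by (simp add: S_def)
  have "p B + z j \<le> p (insert j S) + z i" for j
  proof (cases "p (insert j S) = \<infinity>")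
    case True
    then show ?thesis using zi trop_vec_not_MInfty[OF tz, of i] by simp
  next
    case finite: False
    have "j \<notin> S"
    proof
      assume "j \<in> S"
      then have "p S \<noteq> \<infinity>" using finite by (simp add: insert_absorb)
      then show False using is_tpv_card[OF tp \<open>p S \<noteq> \<infinity>\<close>] cS by simp
    qed
    then consider "j = i" | "j \<notin> B" using BS by blast
    then show ?thesis
    proof cases
      case 2
      then show ?thesis
        using key_minimal_basis_exchange[OF tp tz B zi min 2] finite by (simp add: S_def)
    qed (simp add: BS)
  qed
  then show ?thesis using that[OF SE cS] B(2) by (simp add: BS)
qed

lemma ereal_le_add_shift:
  fixes u v :: ereal
  assumes "ereal P + u \<le> v + ereal Z"
  shows "u \<le> v + ereal (Z - P)"
  using assms by (cases u; cases v) auto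

lemma tls_orth_if_orth_cocircuits:
  assumes tp: "is_tpv E r p" and z: "z \<in> tls E r p" and y: "trop_vec E y"
    and orth: "\<And>S. S \<subseteq> E \<Longrightarrow> card S + 1 = r \<Longrightarrow> torth E (\<lambda>k. p (insert k S)) y"
  shows "torth E z y"
proof (rule ccontr)
  assume "\<not> torth E z y"
  then obtain k0 where k0: "k0 \<in> E" "z k0 + y k0 \<noteq> \<infinity>"
    and less: "\<And>k. k \<in> E \<Longrightarrow> k \<noteq> k0 \<Longrightarrow> z k0 + y k0 < z k + y k"
    using not_min_twice_unique_minimizer[OF is_tpv_finite[OF tp]] unfolding torth_def by blast
  then have "z k0 \<noteq> \<infinity>" by auto
  then obtain S where S: "S \<subseteq> E" "card S + 1 = r" "p (insert k0 S) \<noteq> \<infinity>"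
    and opt: "\<And>j. p (insert k0 S) + z j \<le> p (insert j S) + z k0"
    using tls_optimal_basis[OF tp z] by blast
  obtain P Z Y where P: "p (insert k0 S) = ereal P" and Z: "z k0 = ereal Z" and "y k0 = ereal Y"
    using S(3) \<open>z k0 \<noteq> \<infinity>\<close> k0(2) is_tpv_not_MInfty[OF tp] trop_vec_not_MInfty[OF tls_trop_vec[OF z]]
      trop_vec_not_MInfty[OF y] by (metis ereal_cases ereal_plus_eq_PInfty)
  text \<open>The cocircuit through \<open>k0\<close>, shifted to agree with \<open>z\<close> at \<open>k0\<close>, dominates \<open>z\<close>.\<close>
  define g where "g k = p (insert k S) + y k + ereal (Z - P)" for k
  have "min_twice E g" unfolding g_def min_twice_add_const using orth[OF S(1,2)] unfolding torth_def .
  moreover have gk0: "g k0 = z k0 + y k0" using P Z \<open>y k0 = ereal Y\<close> by (simp add: g_def)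
  ultimately obtain j where j: "j \<in> E" "j \<noteq> k0" "g j \<le> g k0"
    using min_twice_other_minimizer k0 by metis
  have "z j \<le> p (insert j S) + ereal (Z - P)" using opt[of j] P Z by (intro ereal_le_add_shift) simp
  then have "z j + y j \<le> g j" unfolding g_def by (metis add_right_mono add.assoc add.commute)
  also have "\<dots> \<le> z k0 + y k0" using j(3) gk0 by simp
  finally show False using less[OF j(1,2)] by simp
qed

section \<open>Images and duals of Pluecker vectors\<close>

lemma is_tpv_image_involution:
  assumes tp: "is_tpv E r p" and inv: "\<And>x. f (f x) = x" and fE: "f ` E \<subseteq> E"
  shows "is_tpv E r (\<lambda>S. p (f ` S))"
proof -
  have inj: "inj f" using inv by (metis injI)
  have ff: "f ` f ` S = S" for S using inv by (simp add: image_comp comp_def)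
  have sub: "f ` S \<subseteq> E \<longleftrightarrow> S \<subseteq> E" for S
    using fE inv by (metis image_mono ff subset_trans)
  have pv: "trop_pvec E (\<lambda>S. p (f ` S))"
    using tp sub is_tpv_not_MInfty[OF tp] unfolding is_tpv_def trop_pvec_def by simp
  obtain B where B: "p B \<noteq> \<infinity>" using is_tpv_ex_basis[OF tp] by blast
  then have ex: "f ` B \<subseteq> E \<and> p (f ` f ` B) \<noteq> \<infinity>" using sub is_tpv_subset[OF tp] ff by simp
  have card: "card S = r" if "p (f ` S) \<noteq> \<infinity>" for S
    using is_tpv_card[OF tp that] card_image[OF inj_on_subset[OF inj]] by simp
  have "min_twice (T - S) (\<lambda>i. p (f ` insert i S) + p (f ` (T - {i})))"
    if "S \<subseteq> E" "T \<subseteq> E" "card S + 1 = r" "card T = r + 1" for S T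
  proof -
    have "min_twice (f ` T - f ` S) (\<lambda>i. p (insert i (f ` S)) + p (f ` T - {i}))"
      using that sub card_image[OF inj_on_subset[OF inj]]
      by (intro mixed_pluckerD[OF is_tpv_mixed_plucker[OF tp]]) simp_all
    then show ?thesis
      using min_twice_image[OF inj_on_subset[OF inj], of "T - S"]
      by (simp add: image_set_diff[OF inj] comp_def)
  qed
  then show ?thesis
    using is_tpv_finite[OF tp] pv ex card unfolding is_tpv_def by blast
qed

definition dual_pvec :: "'a set \<Rightarrow> ('a set \<Rightarrow> ereal) \<Rightarrow> 'a set \<Rightarrow> ereal" where
  "dual_pvec E p S = (if S \<subseteq> E then p (E - S) else \<infinity>)"

lemma is_tpv_dual_pvec:
  assumes tp: "is_tpv E r p" and cE: "card E = r + s"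
  shows "is_tpv E s (dual_pvec E p)"
proof -
  have fin: "finite E" by (rule is_tpv_finite[OF tp])
  have card_diff: "card (E - S) = r + s - card S" "card S \<le> r + s" if "S \<subseteq> E" for S
    using card_Diff_subset[OF finite_subset[OF that fin] that] card_mono[OF fin that] cE by simp_all
  have pv: "trop_pvec E (dual_pvec E p)"
    using is_tpv_not_MInfty[OF tp] unfolding trop_pvec_def dual_pvec_def by simp
  obtain B where B: "p B \<noteq> \<infinity>" using is_tpv_ex_basis[OF tp] by blast
  then have "B \<subseteq> E" by (rule is_tpv_subset[OF tp])
  then have ex: "E - B \<subseteq> E \<and> dual_pvec E p (E - B) \<noteq> \<infinity>"
    using B by (simp add: dual_pvec_def double_diff)
  have card: "card S = s" if "S \<subseteq> E" "dual_pvec E p S \<noteq> \<infinity>" for S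
    using that is_tpv_card[OF tp, of "E - S"] card_diff[OF that(1)] by (simp add: dual_pvec_def)
  have "min_twice (T - S) (\<lambda>i. dual_pvec E p (insert i S) + dual_pvec E p (T - {i}))"
    if ST: "S \<subseteq> E" "T \<subseteq> E" "card S + 1 = s" "card T = s + 1" for S T
  proof -
    have "card (E - T) + 1 = r" "card (E - S) = r + 1"
      using card_diff[OF ST(1)] card_diff[OF ST(2)] ST(3,4) by simp_all
    then have "min_twice ((E - S) - (E - T)) (\<lambda>i. p (insert i (E - T)) + p ((E - S) - {i}))"
      by (intro mixed_pluckerD[OF is_tpv_mixed_plucker[OF tp]]) auto
    moreover have "(E - S) - (E - T) = T - S" using ST(2) by blast
    moreover have "p (insert i (E - T)) + p ((E - S) - {i}) =
        dual_pvec E p (insert i S) + dual_pvec E p (T - {i})" if "i \<in> T - S" for i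
    proof -
      have "insert i (E - T) = E - (T - {i})" "(E - S) - {i} = E - insert i S"
        using that ST(2) by auto
      then show ?thesis using that ST(1,2) by (auto simp: dual_pvec_def add.commute)
    qed
    ultimately show ?thesis using min_twice_cong by (metis (no_types, lifting))
  qed
  then show ?thesis using fin pv ex card unfolding is_tpv_def by blast
qed

lemma star_star [simp]: "star (star i) = i"
  by (cases i) auto

lemma star_image_image [simp]: "star ` star ` S = S"
  by (simp add: image_comp comp_def)

lemma inj_star: "inj star"
  by (metis injI star_star)

lemma star_in_J_iff [simp]: "star i \<in> J n \<longleftrightarrow> i \<in> J n"
  by (cases i) (auto simp: J_def)

lemma star_image_J [simp]: "star ` J n = J n"
  by (metis star_in_J_iff star_star image_iff subsetI subset_antisym image_subset_iff)

lemma star_image_subset_J_iff [simp]: "star ` S \<subseteq> J n \<longleftrightarrow> S \<subseteq> J n"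
  by auto

lemma finite_J: "finite (J n)"
  by (simp add: J_def)

lemma card_J: "card (J n) = 2 * n"
proof -
  have "card (Pl ` {1..n}) = n" "card (St ` {1..n}) = n" by (simp_all add: card_image inj_on_def)
  moreover have "Pl ` {1..n} \<inter> St ` {1..n} = {}" by auto
  ultimately show ?thesis unfolding J_def by (simp add: card_Un_disjoint)
qed

lemma card_J_diff: "T \<subseteq> J n \<Longrightarrow> card (J n - T) = 2 * n - card T"
  using card_Diff_subset[OF finite_subset[OF _ finite_J]] card_J by metis

lemma min_twice_J_star: "min_twice (J n) f \<longleftrightarrow> min_twice (J n) (\<lambda>k. f (star k))"
  using min_twice_image[OF inj_on_subset[OF inj_star], of "J n" f] by (simp add: comp_def)

lemma torth_reflect_iff: "torth (J n) x (reflect y) \<longleftrightarrow> min_twice (J n) (\<lambda>k. x k + y (star k))"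
  by (simp add: torth_def reflect_def)

lemma reflect_reflect [simp]: "reflect (reflect x) = x"
  by (simp add: reflect_def)

lemma trop_vec_reflect: "trop_vec (J n) x \<Longrightarrow> trop_vec (J n) (reflect x)"
  by (simp add: trop_vec_def reflect_def)

section \<open>Isotropy and self-duality\<close>

definition star_selfdual :: "nat \<Rightarrow> (idx set \<Rightarrow> ereal) \<Rightarrow> bool" where
  "star_selfdual n p \<longleftrightarrow> (\<forall>T. T \<subseteq> J n \<and> card T = n \<longrightarrow> p (J n - T) = p (star ` T))"

lemma dvec_eq_remove:
  assumes "is_tpv E r p" "card T = r + 1"
  shows "dvec p T k = p (T - {k})"
proof (cases "k \<in> T")
  case False
  then have "p (T - {k}) = \<infinity>" using is_tpv_infinite_if_card[OF assms(1)] assms(2) by simp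
  then show ?thesis using False by (simp add: dvec_def)
qed (simp add: dvec_def)

lemma star_selfdual_diff:
  assumes tp: "is_tpv (J n) n p" and sd: "star_selfdual n p" and T: "T \<subseteq> J n"
  shows "p (J n - T) = p (star ` T)"
proof (cases "card T = n")
  case False
  have "card T \<le> 2 * n" using card_mono[OF finite_J T] card_J by metis
  then have "card (J n - T) \<noteq> n" "card (star ` T) \<noteq> n"
    using False card_J_diff[OF T] card_image[OF inj_on_subset[OF inj_star]] by auto
  then show ?thesis using is_tpv_infinite_if_card[OF tp] by metis
qed (use sd T in \<open>simp add: star_selfdual_def\<close>)

lemma star_selfdual_cocircuit:
  assumes tp: "is_tpv (J n) n p" and sd: "star_selfdual n p" and "U \<subseteq> J n" "k \<in> J n"
  shows "p (insert k U) = p ((J n - star ` U) - {star k})"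
proof -
  have "J n - (J n - insert k U) = insert k U" using assms(3,4) by blast
  moreover have "star ` (J n - insert k U) = (J n - star ` U) - {star k}"
    by (auto simp: image_set_diff[OF inj_star])
  ultimately show ?thesis using star_selfdual_diff[OF tp sd, of "J n - insert k U"] by simp
qed

lemma card_J_diff_Suc:
  assumes "T \<subseteq> J n"
  shows "card T = n + 1 \<longleftrightarrow> card (J n - T) + 1 = n"
proof -
  have "card T \<le> 2 * n" using card_mono[OF finite_J assms] card_J by metis
  then show ?thesis unfolding card_J_diff[OF assms] by arith
qed

lemma star_selfdual_reflect_tperp_in_tls:
  assumes tp: "is_tpv (J n) n p" and sd: "star_selfdual n p"
    and y: "y \<in> tperp (J n) (tls (J n) n p)"
  shows "reflect y \<in> tls (J n) n p"
proof -
  have "torth (J n) x (reflect y)" if xC: "x \<in> pl_circuits (J n) n p" for x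
  proof -
    obtain T c where T: "T \<subseteq> J n" "card T = n + 1" and x: "x = (\<lambda>k. dvec p T k + ereal c)"
      using xC unfolding pl_circuits_def by blast
    define U where "U = J n - star ` T"
    have U: "U \<subseteq> J n" "card U + 1 = n" "J n - star ` U = T"
      using T card_J_diff_Suc[of "star ` T" n] card_image[OF inj_on_subset[OF inj_star]]
      by (auto simp: U_def image_set_diff[OF inj_star] image_comp)
    have "(\<lambda>k. p (insert k U)) \<in> tls (J n) n p" by (rule cocircuit_in_tls[OF tp U(1,2)])
    then have "min_twice (J n) (\<lambda>k. p (insert k U) + y k)"
      using y unfolding tperp_def torth_def by auto
    moreover have "p (insert k U) = dvec p T (star k)" if "k \<in> J n" for k
      using star_selfdual_cocircuit[OF tp sd U(1) that] dvec_eq_remove[OF tp T(2)] U(3) by simp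
    ultimately have "min_twice (J n) (\<lambda>k. dvec p T (star k) + y (star (star k)) + ereal c)"
      unfolding min_twice_add_const star_star using min_twice_cong by (metis (no_types, lifting))
    then show ?thesis
      unfolding torth_reflect_iff x by (subst min_twice_J_star) (simp add: ac_simps)
  qed
  moreover have "trop_vec (J n) y" using y by (simp add: tperp_def)
  ultimately show ?thesis unfolding tls_def tperp_def by (simp add: trop_vec_reflect)
qed

lemma star_selfdual_reflect_tls_in_tperp:
  assumes tp: "is_tpv (J n) n p" and sd: "star_selfdual n p" and x: "x \<in> tls (J n) n p"
  shows "reflect x \<in> tperp (J n) (tls (J n) n p)"
proof -
  have tx: "trop_vec (J n) (reflect x)" using trop_vec_reflect[OF tls_trop_vec[OF x]] .
  have "torth (J n) (\<lambda>k. p (insert k U)) (reflect x)" if U: "U \<subseteq> J n" "card U + 1 = n" for U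
  proof -
    define T where "T = J n - star ` U"
    have "J n - T = star ` U" using U(1) by (auto simp: T_def)
    then have T: "T \<subseteq> J n" "card T = n + 1"
      using U(2) card_J_diff_Suc[of T n] card_image[OF inj_on_subset[OF inj_star]]
      by (auto simp: T_def)
    have "min_twice (J n) (\<lambda>k. dvec p T k + x k)" by (rule tls_min_twice_dvec[OF x T])
    moreover have "dvec p T k = p (insert (star k) U)" if "k \<in> J n" for k
      using star_selfdual_cocircuit[OF tp sd U(1), of "star k"] that dvec_eq_remove[OF tp T(2)]
      by (simp add: T_def)
    ultimately have "min_twice (J n) (\<lambda>k. p (insert (star k) U) + x (star (star k)))"
      unfolding star_star using min_twice_cong by (metis (no_types, lifting))
    then show ?thesis unfolding torth_reflect_iff by (subst min_twice_J_star)
  qed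
  then have "torth (J n) z (reflect x)" if "z \<in> tls (J n) n p" for z
    using tls_orth_if_orth_cocircuits[OF tp that tx] by blast
  then show ?thesis unfolding tperp_def using tx by blast
qed

lemma mixed_plucker_if_isotropic:
  assumes tp: "is_tpv (J n) n p"
    and iso: "\<forall>x\<in>tls (J n) n p. \<forall>y\<in>tls (J n) n p. min_twice (J n) (\<lambda>k. x k + y (star k))"
  shows "mixed_plucker (J n) n (\<lambda>S. p (star ` S)) (dual_pvec (J n) p)"
  unfolding mixed_plucker_def
proof (intro allI impI, elim conjE)
  fix S T assume S: "S \<subseteq> J n" "card S + 1 = n" and T: "T \<subseteq> J n" "card T = n + 1"
  have cT: "card (J n - T) + 1 = n" using T card_J_diff_Suc by blast
  have "card (star ` S) + 1 = n" using S(2) card_image[OF inj_on_subset[OF inj_star]] by simp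
  then have y: "(\<lambda>k. p (insert k (star ` S))) \<in> tls (J n) n p"
    using S(1) by (intro cocircuit_in_tls[OF tp]) simp_all
  have x: "(\<lambda>k. p (insert k (J n - T))) \<in> tls (J n) n p"
    using cT by (intro cocircuit_in_tls[OF tp]) auto
  have "min_twice (J n) (\<lambda>k. p (insert k (J n - T)) + p (star ` insert k S))"
    using iso[rule_format, OF x y] by simp
  also have "?this \<longleftrightarrow> min_twice (T - S) (\<lambda>k. p (insert k (J n - T)) + p (star ` insert k S))"
  proof (rule min_twice_restrict)
    fix k assume k: "k \<in> J n" "k \<notin> T - S"
    show "p (insert k (J n - T)) + p (star ` insert k S) = \<infinity>"
    proof (cases "k \<in> T")
      case True
      then have "card (star ` insert k S) \<noteq> n"
        using k S(2) card_image[OF inj_on_subset[OF inj_star]] by (simp add: insert_absorb)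
      then show ?thesis using is_tpv_infinite_if_card[OF tp] by simp
    next
      case False
      then have "card (insert k (J n - T)) \<noteq> n" using k cT by (simp add: insert_absorb)
      then show ?thesis using is_tpv_infinite_if_card[OF tp] by simp
    qed
  qed (use T(1) in blast)
  also have "\<dots> \<longleftrightarrow> min_twice (T - S) (\<lambda>k. p (star ` insert k S) + dual_pvec (J n) p (T - {k}))"
  proof (rule min_twice_cong)
    fix k assume "k \<in> T - S"
    then have "J n - (T - {k}) = insert k (J n - T)" using T(1) by blast
    then show "p (insert k (J n - T)) + p (star ` insert k S) =
        p (star ` insert k S) + dual_pvec (J n) p (T - {k})"
      using T(1) by (auto simp: dual_pvec_def add.commute)
  qed
  finally show "min_twice (T - S) (\<lambda>k. p (star ` insert k S) + dual_pvec (J n) p (T - {k}))" .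
qed

lemma star_selfdual_if_mixed_plucker:
  assumes tp: "is_tpv (J n) n p"
    and mp: "mixed_plucker (J n) n (\<lambda>S. p (star ` S)) (dual_pvec (J n) p)"
  shows "star_selfdual n p"
proof -
  have "is_tpv (J n) n (\<lambda>S. p (star ` S))" by (rule is_tpv_image_involution[OF tp]) simp_all
  moreover have "is_tpv (J n) n (dual_pvec (J n) p)" using card_J by (intro is_tpv_dual_pvec[OF tp]) simp
  ultimately obtain c where c: "\<And>S. p (star ` S) = dual_pvec (J n) p S + ereal c"
    using mixed_plucker_eq_shift[OF _ _ mp] by blast
  obtain B where B: "p B \<noteq> \<infinity>" using is_tpv_ex_basis[OF tp] by blast
  then have BJ: "B \<subseteq> J n" by (rule is_tpv_subset[OF tp])
  obtain b where b: "p B = ereal b" using B is_tpv_not_MInfty[OF tp, of B] by (cases "p B") auto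
  text \<open>Evaluating the shift at \<open>star ` B\<close> and at its complement gives \<open>c = -c\<close>.\<close>
  have "p B = p (J n - star ` B) + ereal c" using c[of "star ` B"] BJ by (simp add: dual_pvec_def)
  moreover have "p (J n - star ` B) = p B + ereal c"
    using c[of "J n - B"] BJ by (simp add: dual_pvec_def double_diff image_set_diff[OF inj_star])
  ultimately have "c = 0" using b by (cases "p (J n - star ` B)") auto
  then show ?thesis using c by (simp add: star_selfdual_def dual_pvec_def)
qed

lemma tperp_tls_eq_reflect_if_star_selfdual:
  assumes tp: "is_tpv (J n) n p" and sd: "star_selfdual n p"
  shows "tperp (J n) (tls (J n) n p) = reflect ` tls (J n) n p"
proof
  show "tperp (J n) (tls (J n) n p) \<subseteq> reflect ` tls (J n) n p"
    using star_selfdual_reflect_tperp_in_tls[OF tp sd] by (metis image_eqI reflect_reflect subsetI)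
  show "reflect ` tls (J n) n p \<subseteq> tperp (J n) (tls (J n) n p)"
    using star_selfdual_reflect_tls_in_tperp[OF tp sd] by blast
qed

theorem theorem7p3:
  fixes n :: nat and p :: "idx set \<Rightarrow> ereal" and L :: "(idx \<Rightarrow> ereal) set"
  assumes "is_tpv (J n) n p"
    and "L = tls (J n) n p"
  shows "(isotropical n L \<longleftrightarrow> tperp (J n) L = reflect ` L) \<and>
         (tperp (J n) L = reflect ` L \<longleftrightarrow>
            (\<forall>T. T \<subseteq> J n \<and> card T = n \<longrightarrow> p (J n - T) = p (star ` T)))"
proof -
  have iso: "isotropical n L \<longleftrightarrow> (\<forall>x\<in>L. \<forall>y\<in>L. min_twice (J n) (\<lambda>k. x k + y (star k)))"
    using assms unfolding isotropical_def is_tls_dim_def by blast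
  have "isotropical n L \<Longrightarrow> star_selfdual n p"
    using assms star_selfdual_if_mixed_plucker mixed_plucker_if_isotropic iso by blast
  moreover have "star_selfdual n p \<Longrightarrow> tperp (J n) L = reflect ` L"
    using assms tperp_tls_eq_reflect_if_star_selfdual by blast
  moreover have "isotropical n L" if "tperp (J n) L = reflect ` L"
    unfolding iso
  proof (intro ballI)
    fix x y assume "x \<in> L" "y \<in> L"
    then have "torth (J n) x (reflect y)" using that unfolding tperp_def by blast
    then show "min_twice (J n) (\<lambda>k. x k + y (star k))" by (simp add: torth_reflect_iff)
  qed
  ultimately show ?thesis unfolding star_selfdual_def by blast
qed

end
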